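(* Let $\{a,b\}$ be a $2$-element generating set of a finite abelian group $G$, and let $P$ and $P'$ be spanning quasi-paths in $\mathrm{Cay}(G;a,b)$ such that $\delta_b(P)=\delta_b(P')$. If $P$ is a hamiltonian path, then $P'$ is also a hamiltonian path.
   Context: The Cayley digraph $\mathrm{Cay}(G;a,b)$ has vertex set $G$ and an arc from $v$ to $v+s$ for all $v\in G$, $s\in\{a,b\}$; such an arc is an $s$-edge, and $\delta_b(P)$ denotes the number of $b$-edges in a subdigraph $P$. A spanning quasi-path in a digraph is a spanning subdigraph such that exactly one connected component is a directed path and all other components are directed cycles. A hamiltonian path is a directed path visiting every vertex exactly once. *)

theory Defs
  imports Main
begin

inductive_set subgroup_gen :: "'g::ab_group_add set \<Rightarrow> 'g set" for S where
  zero: "0 \<in> subgroup_gen S"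
| gen: "s \<in> S \<Longrightarrow> s \<in> subgroup_gen S"
| add: "x \<in> subgroup_gen S \<Longrightarrow> y \<in> subgroup_gen S \<Longrightarrow> x + y \<in> subgroup_gen S"
| neg: "x \<in> subgroup_gen S \<Longrightarrow> - x \<in> subgroup_gen S"

definition generates :: "'g::ab_group_add set \<Rightarrow> bool" where
  "generates S \<longleftrightarrow> subgroup_gen S = UNIV"

text \<open>Arcs of Cay(G;a,b): from v to v+s with s in {a,b}. A subdigraph is a set of arcs.\<close>
definition cay_arcs :: "'g::ab_group_add \<Rightarrow> 'g \<Rightarrow> ('g \<times> 'g) set" where
  "cay_arcs a b = {(v, w). w = v + a \<or> w = v + b}"

definition delta_b :: "'g::ab_group_add \<Rightarrow> ('g \<times> 'g) set \<Rightarrow> nat" where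
  "delta_b b P = card {(v, w) \<in> P. w = v + b}"

definition path_arcs :: "'a list \<Rightarrow> ('a \<times> 'a) set" where
  "path_arcs xs = set (zip xs (tl xs))"

definition cycle_arcs :: "'a list \<Rightarrow> ('a \<times> 'a) set" where
  "cycle_arcs xs = set (zip xs (tl xs @ [hd xs]))"

definition is_dipath :: "'g::ab_group_add \<Rightarrow> 'g \<Rightarrow> 'g list \<Rightarrow> bool" where
  "is_dipath a b xs \<longleftrightarrow> xs \<noteq> [] \<and> distinct xs \<and> path_arcs xs \<subseteq> cay_arcs a b"

definition is_dicycle :: "'g::ab_group_add \<Rightarrow> 'g \<Rightarrow> 'g list \<Rightarrow> bool" where
  "is_dicycle a b xs \<longleftrightarrow> xs \<noteq> [] \<and> distinct xs \<and> cycle_arcs xs \<subseteq> cay_arcs a b"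

definition spanning_quasi_path :: "'g::ab_group_add \<Rightarrow> 'g \<Rightarrow> ('g \<times> 'g) set \<Rightarrow> bool" where
  "spanning_quasi_path a b P \<longleftrightarrow>
     (\<exists>p C. is_dipath a b p \<and> (\<forall>c\<in>C. is_dicycle a b c)
        \<and> (\<forall>c\<in>C. set c \<inter> set p = {})
        \<and> (\<forall>c\<in>C. \<forall>c'\<in>C. c \<noteq> c' \<longrightarrow> set c \<inter> set c' = {})
        \<and> set p \<union> (\<Union>c\<in>C. set c) = UNIV
        \<and> P = path_arcs p \<union> (\<Union>c\<in>C. cycle_arcs c))"

definition hamiltonian_path :: "'g::ab_group_add \<Rightarrow> 'g \<Rightarrow> ('g \<times> 'g) set \<Rightarrow> bool" where
  "hamiltonian_path a b P \<longleftrightarrow> (\<exists>p. is_dipath a b p \<and> set p = UNIV \<and> P = path_arcs p)"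

end

(*
  A spanning quasi-path whose path runs from s to t is the arc set of a permutation f of G
  with the arc t -> s removed, where the step f v - v lies in {a, b} for every v other
  than t; it is a hamiltonian path iff f is a single cycle.  Summing the steps over G gives
  s - a - t = delta_b * (a - b), so delta_b determines s - t.  Since u and u + (a - b) are
  the only in-neighbours of u + a, the step is constant on every coset of H = <a - b>
  other than t + H, and on t + H it is determined by s - t alone.  So two quasi-paths with
  the same delta_b agree, after translation by t' - t, up to a defect in H that is constant
  on each coset.  As a and b generate G, the quotient G/H is cyclic, generated by a, and f
  moves every coset to the next one; adding up the defects along this cycle of cosets
  (they sum to zero, by counting b-arcs coset by coset) yields a bijection conjugating f to
  f'.  Conjugate permutations have the same number of cycles.
*)
theory Submission
  imports Defs "HOL-Library.Cardinality"
begin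

fun nsmul :: "nat \<Rightarrow> 'g::monoid_add \<Rightarrow> 'g" where
  "nsmul 0 x = 0"
| "nsmul (Suc n) x = x + nsmul n x"

lemma nsmul_add: "nsmul (m + n) x = nsmul m x + nsmul n x"
  by (induction m) (simp_all add: add.assoc)

lemma nsmul_zero [simp]: "nsmul n 0 = 0"
  by (induction n) simp_all

lemma nsmul_mult: "nsmul (m * n) x = nsmul m (nsmul n x)"
  by (induction m) (simp_all add: nsmul_add)

lemma sum_constant_nsmul: "(\<Sum>v\<in>A. x) = nsmul (card A) x"
proof (cases "finite A")
  case True
  then show ?thesis by (induction rule: finite_induct) simp_all
qed simp

lemma nsmul_card_UNIV: "nsmul CARD('g) (x::'g::{ab_group_add,finite}) = 0"
proof -
  have "(\<Sum>v\<in>UNIV. v + x) = (\<Sum>v\<in>UNIV. v)"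
    by (rule sum.reindex_bij_witness[of _ "\<lambda>v. v - x" "\<lambda>v. v + x"]) simp_all
  then show ?thesis by (simp add: sum.distrib sum_constant_nsmul)
qed

lemma uminus_nsmul:
  "- nsmul n (x::'g::{ab_group_add,finite}) = nsmul ((CARD('g) - 1) * n) x"
proof -
  have "(CARD('g) - 1) * n + n = CARD('g) * n"
    using card_gt_0_iff[of "UNIV::'g set"] by (cases "CARD('g)") simp_all
  then have "nsmul n x + nsmul ((CARD('g) - 1) * n) x = nsmul (CARD('g) * n) x"
    by (metis add.commute nsmul_add)
  also have "\<dots> = 0" by (simp add: mult.commute nsmul_mult nsmul_card_UNIV)
  finally show ?thesis by (rule minus_unique)
qed

definition multiples :: "'g::monoid_add \<Rightarrow> 'g set" where
  "multiples d = range (\<lambda>n. nsmul n d)"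

lemma nsmul_in_multiples [simp]: "nsmul n d \<in> multiples d"
  unfolding multiples_def by blast

lemma zero_in_multiples [simp]: "0 \<in> multiples d"
  using nsmul_in_multiples[of 0 d] by simp

lemma self_in_multiples [simp]: "d \<in> multiples d"
  using nsmul_in_multiples[of 1 d] by simp

lemma multiples_add [intro]:
  assumes "x \<in> multiples d" and "y \<in> multiples d"
  shows "x + y \<in> multiples d"
proof -
  obtain i j where "x = nsmul i d" "y = nsmul j d" using assms by (auto simp: multiples_def)
  then have "x + y = nsmul (i + j) d" by (simp add: nsmul_add)
  then show ?thesis by simp
qed

lemma multiples_nsmul [intro]:
  assumes "x \<in> multiples d"
  shows "nsmul n x \<in> multiples d"
proof -
  obtain i where "x = nsmul i d" using assms by (auto simp: multiples_def)
  then have "nsmul n x = nsmul (n * i) d" by (simp add: nsmul_mult)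
  then show ?thesis by simp
qed

lemma multiples_uminus [intro]:
  assumes "x \<in> multiples (d::'g::{ab_group_add,finite})"
  shows "- x \<in> multiples d"
proof -
  obtain i where "x = nsmul i d" using assms by (auto simp: multiples_def)
  then have "- x = nsmul ((CARD('g) - 1) * i) d" by (simp add: uminus_nsmul)
  then show ?thesis by simp
qed

lemma multiples_diff [intro]:
  "x \<in> multiples (d::'g::{ab_group_add,finite}) \<Longrightarrow> y \<in> multiples d \<Longrightarrow> x - y \<in> multiples d"
  using multiples_add[of x d "- y"] by auto

lemma multiples_sum:
  "(\<And>i. i \<in> I \<Longrightarrow> x i \<in> multiples (d::'g::comm_monoid_add)) \<Longrightarrow> sum x I \<in> multiples d"
  by (induction I rule: infinite_finite_induct) auto

lemma sum_two_valued:
  assumes "finite I" and "\<And>i. i \<in> I \<Longrightarrow> x i = a \<or> x i = b"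
  shows "(\<Sum>i\<in>I. x i) = nsmul (card I) a - nsmul (card {i\<in>I. x i = b}) (a - (b::'g::ab_group_add))"
proof -
  have "(\<Sum>i\<in>I. x i) = (\<Sum>i\<in>I. a - (if x i = b then a - b else 0))"
    by (rule sum.cong) (use assms(2) in auto)
  also have "\<dots> = nsmul (card I) a - (\<Sum>i\<in>I. if x i = b then a - b else 0)"
    by (simp add: sum_subtractf sum_constant_nsmul)
  also have "(\<Sum>i\<in>I. if x i = b then a - b else 0) = nsmul (card {i\<in>I. x i = b}) (a - b)"
    by (simp add: sum.inter_filter[OF assms(1), symmetric] sum_constant_nsmul)
  finally show ?thesis .
qed

lemma generates_ex_nsmul_coset:
  assumes "generates {a, b}"
  shows "\<exists>n. x - nsmul n a \<in> multiples (a - (b::'g::{ab_group_add,finite}))"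
proof -
  have "x \<in> subgroup_gen {a, b}" using assms unfolding generates_def by simp
  then show ?thesis
  proof (induction rule: subgroup_gen.induct)
    case zero
    have "0 - nsmul 0 a \<in> multiples (a - b)" by simp
    then show ?case by blast
  next
    case (gen y)
    have "y - nsmul 1 a = 0 \<or> y - nsmul 1 a = - (a - b)" using gen by auto
    then have "y - nsmul 1 a \<in> multiples (a - b)"
      using multiples_uminus[OF self_in_multiples[of "a - b"]] by auto
    then show ?case by blast
  next
    case (add x y)
    then obtain i j where "x - nsmul i a \<in> multiples (a - b)" "y - nsmul j a \<in> multiples (a - b)"
      by blast
    then have "(x - nsmul i a) + (y - nsmul j a) \<in> multiples (a - b)" by blast
    moreover have "(x - nsmul i a) + (y - nsmul j a) = x + y - nsmul (i + j) a"
      by (simp add: nsmul_add algebra_simps)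
    ultimately show ?case by metis
  next
    case (neg x)
    then obtain i where "x - nsmul i a \<in> multiples (a - b)" by blast
    then have "- (x - nsmul i a) \<in> multiples (a - b)" by (rule multiples_uminus)
    moreover have "- (x - nsmul i a) = - x - nsmul ((CARD('g) - 1) * i) a"
      unfolding uminus_nsmul[symmetric] by simp
    ultimately show ?case by metis
  qed
qed

text \<open>\<open>f\<close> is the successor map of a spanning quasi-path whose path runs from \<open>s\<close> to \<open>t\<close>,
  closed up by the extra arc \<open>t \<rightarrow> s\<close>; the quasi-path itself is \<open>succ_arcs f t\<close>.\<close>
locale quasi_path_map =
  fixes a b t s :: "'g::{ab_group_add,finite}" and f :: "'g \<Rightarrow> 'g"
  assumes a_neq_b: "a \<noteq> b" and inj: "inj f" and terminal: "f t = s"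
    and step_cases: "\<And>v. v \<noteq> t \<Longrightarrow> f v = v + a \<or> f v = v + b"

definition succ_arcs :: "('a \<Rightarrow> 'a) \<Rightarrow> 'a \<Rightarrow> ('a \<times> 'a) set" where
  "succ_arcs f t = {(v, f v) | v. v \<noteq> t}"

lemma cycle_arcs_rotate1: "cycle_arcs xs = set (zip xs (rotate1 xs))"
  unfolding cycle_arcs_def by (cases xs) simp_all

lemma cycle_arcs_eq_insert_path_arcs:
  assumes "xs \<noteq> []"
  shows "cycle_arcs xs = insert (last xs, hd xs) (path_arcs xs)"
proof -
  have len: "length (butlast xs) = length (tl xs)" by simp
  have "zip xs (tl xs) = zip (butlast xs @ [last xs]) (tl xs)" using assms by simp
  also have "\<dots> = zip (butlast xs) (tl xs)" by (simp add: zip_append1 len)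
  finally have path: "path_arcs xs = set (zip (butlast xs) (tl xs))" by (simp add: path_arcs_def)
  have "zip xs (tl xs @ [hd xs]) = zip (butlast xs @ [last xs]) (tl xs @ [hd xs])" using assms by simp
  also have "\<dots> = zip (butlast xs) (tl xs) @ [(last xs, hd xs)]" using len by simp
  finally show ?thesis by (simp add: cycle_arcs_def path)
qed

lemma path_arcs_nth: "Suc i < length xs \<Longrightarrow> (xs ! i, xs ! Suc i) \<in> path_arcs xs"
  unfolding path_arcs_def in_set_zip by (intro exI[of _ i]) (simp add: nth_tl)

lemma last_notin_Domain_path_arcs: "distinct xs \<Longrightarrow> last xs \<notin> Domain (path_arcs xs)"
  unfolding path_arcs_def
  by (cases xs rule: rev_cases) (auto simp: zip_append1 dest: set_zip_leftD)

lemma single_valued_set_zip: "distinct xs \<Longrightarrow> single_valued (set (zip xs ys))"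
  by (auto simp: single_valued_def in_set_zip nth_eq_iff_index_eq)

lemma converse_set_zip: "(set (zip xs ys))\<inverse> = set (zip ys xs)"
  by (auto simp: in_set_zip)

lemma cycle_arcs_subset: "cycle_arcs xs \<subseteq> set xs \<times> set xs"
  unfolding cycle_arcs_rotate1 by (auto dest: set_zip_leftD set_zip_rightD)

lemma Domain_cycle_arcs: "Domain (cycle_arcs xs) = set xs"
  unfolding cycle_arcs_rotate1 Domain_fst by (simp flip: set_map)

lemma single_valued_UN_disjoint:
  assumes "\<And>i. i \<in> I \<Longrightarrow> single_valued (r i)"
    and "\<And>i j. i \<in> I \<Longrightarrow> j \<in> I \<Longrightarrow> i \<noteq> j \<Longrightarrow> Domain (r i) \<inter> Domain (r j) = {}"
  shows "single_valued (\<Union>i\<in>I. r i)"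
proof (rule single_valuedI)
  fix x y z assume "(x, y) \<in> (\<Union>i\<in>I. r i)" "(x, z) \<in> (\<Union>i\<in>I. r i)"
  then obtain i j where i: "i \<in> I" "(x, y) \<in> r i" and j: "j \<in> I" "(x, z) \<in> r j" by blast
  then have "i = j" using assms(2) by blast
  then show "y = z" using i j assms(1) single_valuedD by metis
qed

lemma single_valued_cycle_arcs_UN:
  assumes distinct: "\<forall>c\<in>F. distinct c"
    and disjoint: "\<forall>c\<in>F. \<forall>c'\<in>F. c \<noteq> c' \<longrightarrow> set c \<inter> set c' = {}"
  shows "single_valued (\<Union>c\<in>F. cycle_arcs c)" "single_valued ((\<Union>c\<in>F. cycle_arcs c)\<inverse>)"
proof -
  have dom: "Domain (cycle_arcs c) \<subseteq> set c" "Range (cycle_arcs c) \<subseteq> set c" for c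
    using cycle_arcs_subset[of c] by auto
  have disj: "Domain (cycle_arcs c) \<inter> Domain (cycle_arcs c') = {}"
    "Range (cycle_arcs c) \<inter> Range (cycle_arcs c') = {}"
    if "c \<in> F" "c' \<in> F" "c \<noteq> c'" for c c'
  proof -
    have "set c \<inter> set c' = {}" using disjoint that by simp
    then show "Domain (cycle_arcs c) \<inter> Domain (cycle_arcs c') = {}"
      "Range (cycle_arcs c) \<inter> Range (cycle_arcs c') = {}"
      using Int_mono[OF dom(1)[of c] dom(1)[of c']] Int_mono[OF dom(2)[of c] dom(2)[of c']]
      by simp_all
  qed
  have sv: "single_valued (cycle_arcs c)" "single_valued ((cycle_arcs c)\<inverse>)" if "c \<in> F" for c
    using distinct that single_valued_set_zip[of c] single_valued_set_zip[of "rotate1 c" c]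
    by (simp_all add: cycle_arcs_rotate1 converse_set_zip)
  show "single_valued (\<Union>c\<in>F. cycle_arcs c)"
    by (rule single_valued_UN_disjoint) (simp_all add: sv disj)
  show "single_valued ((\<Union>c\<in>F. cycle_arcs c)\<inverse>)"
    unfolding converse_UNION by (rule single_valued_UN_disjoint) (simp_all add: sv disj)
qed

lemma cycle_arcs_UN_graph:
  assumes distinct: "\<forall>c\<in>F. distinct c"
    and disjoint: "\<forall>c\<in>F. \<forall>c'\<in>F. c \<noteq> c' \<longrightarrow> set c \<inter> set c' = {}"
    and spanning: "(\<Union>c\<in>F. set c) = UNIV"
  obtains f where "inj f" and "\<And>v w. (v, w) \<in> (\<Union>c\<in>F. cycle_arcs c) \<longleftrightarrow> w = f v"
proof -
  define R where "R = (\<Union>c\<in>F. cycle_arcs c)"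
  note sv = single_valued_cycle_arcs_UN[OF distinct disjoint, folded R_def]
  have "Domain R = UNIV"
    using spanning by (simp add: R_def Domain_Union image_image Domain_cycle_arcs)
  then have R_arc: "\<exists>w. (v, w) \<in> R" for v by blast
  define f where "f v = (THE w. (v, w) \<in> R)" for v
  have f_arc: "(v, w) \<in> R \<longleftrightarrow> w = f v" for v w
  proof -
    obtain w' where w': "(v, w') \<in> R" using R_arc by blast
    then have "f v = w'"
      unfolding f_def using sv(1) by (auto simp: single_valued_def intro: the_equality)
    then show ?thesis using w' sv(1) by (auto simp: single_valued_def)
  qed
  moreover have "inj f"
    using sv(2) f_arc by (auto intro!: injI simp: single_valued_def)
  ultimately show ?thesis using that R_def by blast
qed

lemma components_succ_map:
  fixes p :: "'g::{ab_group_add,finite} list"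
  assumes "a \<noteq> b" and path: "is_dipath a b p" and cycles: "\<forall>c\<in>C. is_dicycle a b c"
    and disjoint_path: "\<forall>c\<in>C. set c \<inter> set p = {}"
    and disjoint_cycles: "\<forall>c\<in>C. \<forall>c'\<in>C. c \<noteq> c' \<longrightarrow> set c \<inter> set c' = {}"
    and spanning: "set p \<union> (\<Union>c\<in>C. set c) = UNIV"
  obtains f where "quasi_path_map a b (last p) (hd p) f"
    and "path_arcs p \<union> (\<Union>c\<in>C. cycle_arcs c) = succ_arcs f (last p)"
    and "\<And>v. f v \<in> set p \<longleftrightarrow> v \<in> set p"
    and "\<And>i. i < length p \<Longrightarrow> (f ^^ i) (hd p) = p ! i"
proof -
  define P where "P = path_arcs p \<union> (\<Union>c\<in>C. cycle_arcs c)"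
  have p: "p \<noteq> []" "distinct p" using path by (simp_all add: is_dipath_def)
  obtain f where "inj f" and f_arc: "\<And>v w. (v, w) \<in> (\<Union>c\<in>insert p C. cycle_arcs c) \<longleftrightarrow> w = f v"
    by (rule cycle_arcs_UN_graph[of "insert p C"])
      (use p cycles disjoint_path disjoint_cycles spanning in \<open>auto simp: is_dicycle_def\<close>)
  have R_P: "(\<Union>c\<in>insert p C. cycle_arcs c) = insert (last p, hd p) P"
    using p by (simp add: P_def cycle_arcs_eq_insert_path_arcs)
  then have succ: "(v, w) \<in> insert (last p, hd p) P \<longleftrightarrow> w = f v" for v w
    using f_arc[of v w] by simp
  then have f_last: "f (last p) = hd p" using succ[of "last p" "hd p"] by simp
  have "last p \<notin> Domain P"
    using last_notin_Domain_path_arcs[OF p(2)] disjoint_path cycle_arcs_subset p(1)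
    by (fastforce simp: P_def)
  then have "P = insert (last p, hd p) P - {(last p, hd p)}" by auto
  also have "\<dots> = succ_arcs f (last p)" using succ f_last by (auto simp: succ_arcs_def)
  finally have P_succ: "P = succ_arcs f (last p)" .
  have "P \<subseteq> cay_arcs a b"
    using path cycles by (auto simp: P_def is_dipath_def is_dicycle_def)
  then have "quasi_path_map a b (last p) (hd p) f"
    using \<open>a \<noteq> b\<close> \<open>inj f\<close> f_last by unfold_locales (auto simp: P_succ succ_arcs_def cay_arcs_def)
  moreover have "f v \<in> set p \<longleftrightarrow> v \<in> set p" for v
  proof -
    obtain c where "c \<in> insert p C" "(v, f v) \<in> cycle_arcs c" using f_arc[of v "f v"] by auto
    then show ?thesis using cycle_arcs_subset disjoint_path by auto
  qed
  moreover have "(f ^^ i) (hd p) = p ! i" if "i < length p" for i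
    using that
  proof (induction i)
    case (Suc i)
    then have "(p ! i, p ! Suc i) \<in> insert (last p, hd p) P" using P_def path_arcs_nth by blast
    then show ?case using Suc succ by simp
  qed (simp add: p(1) hd_conv_nth)
  ultimately show ?thesis using that P_succ P_def by blast
qed

lemma hamiltonian_path_succ_map:
  fixes P :: "('g::{ab_group_add,finite} \<times> 'g) set"
  assumes "a \<noteq> b" and "hamiltonian_path a b P"
  obtains t s f where "quasi_path_map a b t s f" and "P = succ_arcs f t"
    and "\<forall>v. \<exists>n. (f ^^ n) s = v"
proof -
  obtain p where p: "is_dipath a b p" "set p = UNIV" "P = path_arcs p"
    using assms(2) unfolding hamiltonian_path_def by blast
  obtain f where "quasi_path_map a b (last p) (hd p) f" "P = succ_arcs f (last p)"
    and orbit: "\<And>i. i < length p \<Longrightarrow> (f ^^ i) (hd p) = p ! i"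
    using components_succ_map[OF assms(1) p(1), of "{}"] p by auto
  moreover have "\<forall>v. \<exists>n. (f ^^ n) (hd p) = v"
    using orbit p(2) by (metis UNIV_I in_set_conv_nth)
  ultimately show ?thesis using that by blast
qed

lemma spanning_quasi_path_succ_map:
  fixes P :: "('g::{ab_group_add,finite} \<times> 'g) set"
  assumes "a \<noteq> b" and "spanning_quasi_path a b P"
  obtains t s f where "quasi_path_map a b t s f" and "P = succ_arcs f t"
    and "\<exists>x. \<forall>v. \<exists>n. (f ^^ n) x = v \<Longrightarrow> hamiltonian_path a b P"
proof -
  obtain p C where path: "is_dipath a b p" and cycles: "\<forall>c\<in>C. is_dicycle a b c"
    and disjoint: "\<forall>c\<in>C. set c \<inter> set p = {}"
      "\<forall>c\<in>C. \<forall>c'\<in>C. c \<noteq> c' \<longrightarrow> set c \<inter> set c' = {}"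
    and spanning: "set p \<union> (\<Union>c\<in>C. set c) = UNIV"
    and P: "P = path_arcs p \<union> (\<Union>c\<in>C. cycle_arcs c)"
    using assms(2) unfolding spanning_quasi_path_def by blast
  obtain f where f: "quasi_path_map a b (last p) (hd p) f" "P = succ_arcs f (last p)"
    and closed: "\<And>v. f v \<in> set p \<longleftrightarrow> v \<in> set p"
    using components_succ_map[OF assms(1) path cycles disjoint spanning] P by metis
  have "hamiltonian_path a b P" if orbit: "\<forall>v. \<exists>n. (f ^^ n) x = v" for x
  proof -
    have closed_pow: "(f ^^ n) v \<in> set p \<longleftrightarrow> v \<in> set p" for n v
      by (induction n) (simp_all add: closed)
    have "hd p \<in> set p" using path by (simp add: is_dipath_def)
    then have "x \<in> set p" using orbit closed_pow by metis
    then have "set p = UNIV" using orbit closed_pow by (metis UNIV_eq_I)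
    then have "C = {}" using disjoint(1) cycles by (force simp: is_dicycle_def)
    then show ?thesis using path P \<open>set p = UNIV\<close> by (auto simp: hamiltonian_path_def)
  qed
  then show ?thesis using that f by blast
qed

context quasi_path_map
begin

definition step :: "'g \<Rightarrow> 'g" where
  "step v = f v - v"

definition b_arcs :: "'g set" where
  "b_arcs = {v. v \<noteq> t \<and> step v = b}"

lemma f_eq_step: "f v = v + step v"
  by (simp add: step_def)

lemma step_a_or_b: "v \<noteq> t \<Longrightarrow> step v = a \<or> step v = b"
  using step_cases[of v] by (auto simp: step_def)

lemma step_terminal: "step t = s - t"
  by (simp add: step_def terminal)

lemma surj: "surj f"
  using finite_UNIV_inj_surj[OF finite_class.finite_UNIV inj] .

lemma sum_step: "(\<Sum>v\<in>UNIV. step v) = 0"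
proof -
  have "(\<Sum>v\<in>UNIV. f v) = (\<Sum>v\<in>UNIV. v)"
    using sum.reindex[OF inj, of id] surj by simp
  then show ?thesis by (simp add: step_def sum_subtractf)
qed

lemma terminal_offset: "s - a - t = nsmul (card b_arcs) (a - b)"
proof -
  have "(\<Sum>v\<in>UNIV - {t}. step v) =
      nsmul (CARD('g) - 1) a - nsmul (card b_arcs) (a - b)"
    using sum_two_valued[of "UNIV - {t}" step a b] step_a_or_b
    by (simp add: b_arcs_def card_Diff_singleton conj_commute)
  also have "nsmul (CARD('g) - 1) a = - a"
    using uminus_nsmul[of 1 a] by simp
  finally have other_steps: "(\<Sum>v\<in>UNIV - {t}. step v) = - a - nsmul (card b_arcs) (a - b)" .
  have "s - a - t = (step t + (\<Sum>v\<in>UNIV - {t}. step v)) + a + nsmul (card b_arcs) (a - b) - a"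
    by (simp add: other_steps step_terminal algebra_simps)
  also have "step t + (\<Sum>v\<in>UNIV - {t}. step v) = 0"
    using sum_step sum.remove[of UNIV t step] by simp
  finally show ?thesis by simp
qed

lemma delta_b_succ_arcs: "delta_b b (succ_arcs f t) = card b_arcs"
proof -
  have "{(v, w) \<in> succ_arcs f t. w = v + b} = (\<lambda>v. (v, f v)) ` b_arcs"
    by (auto simp: succ_arcs_def b_arcs_def step_def algebra_simps)
  then show ?thesis
    by (simp add: delta_b_def card_image inj_on_def)
qed

lemma succ_in_coset_of_add_a: "f v - (v + a) \<in> multiples (a - b)"
proof (cases "v = t")
  case True
  then show ?thesis using terminal terminal_offset by (simp add: algebra_simps)
next
  case False
  show ?thesis using step_cases[OF False]
  proof
    assume "f v = v + b"
    then have "f v - (v + a) = - (a - b)" by (simp add: algebra_simps)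
    moreover have "- (a - b) \<in> multiples (a - b)" by (rule multiples_uminus) simp
    ultimately show ?thesis by (simp only:)
  qed simp
qed

text \<open>The vertex \<open>u + a\<close> has exactly the two in-neighbours \<open>u\<close> and \<open>u + (a - b)\<close>, and
  exactly one of them uses its arc into \<open>u + a\<close>, unless \<open>u + a = s\<close> has no in-arc at all.\<close>
lemma step_diagonal:
  assumes "u + (a - b) \<noteq> t"
  shows "step (u + (a - b)) = (if u + a = s then a else if u = t then b else step u)"
proof -
  define y where "y = u + (a - b)"
  have "y \<noteq> t" "y \<noteq> u" using assms a_neq_b by (simp_all add: y_def)
  have y_b: "step y = b \<longleftrightarrow> f y = u + a"
    using step_a_or_b[OF \<open>y \<noteq> t\<close>] a_neq_b by (auto simp: f_eq_step y_def algebra_simps)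
  have "f y = u + a \<longleftrightarrow> u + a \<noteq> s \<and> (u = t \<or> step u = b)"
  proof
    assume fy: "f y = u + a"
    have "u + a \<noteq> s" using fy terminal inj \<open>y \<noteq> t\<close> by (metis injD)
    moreover have "u = t \<or> step u = b"
      using fy inj \<open>y \<noteq> u\<close> step_a_or_b[of u] by (metis f_eq_step injD)
    ultimately show "u + a \<noteq> s \<and> (u = t \<or> step u = b)" ..
  next
    assume u: "u + a \<noteq> s \<and> (u = t \<or> step u = b)"
    obtain x where x: "f x = u + a" using surj by (metis surjD)
    then have "x \<noteq> t" using u terminal by auto
    have "x \<noteq> u" using u x a_neq_b \<open>x \<noteq> t\<close> by (auto simp: f_eq_step)
    then have "x = y"
      using x step_cases[OF \<open>x \<noteq> t\<close>] by (auto simp: y_def algebra_simps)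
    then show "f y = u + a" using x by simp
  qed
  then show ?thesis
    using y_b step_a_or_b[OF \<open>y \<noteq> t\<close>] step_a_or_b[of u] by (auto simp: y_def)
qed

lemma step_coset_const:
  assumes "x - t \<notin> multiples (a - b)" and "h \<in> multiples (a - b)"
  shows "step (x + h) = step x"
proof -
  have "step (x + nsmul n (a - b)) = step x" for n
  proof (induction n)
    case (Suc n)
    define u where "u = x + nsmul n (a - b)"
    have "u - t \<notin> multiples (a - b)"
      using assms(1) multiples_diff[of "u - t" "a - b" "nsmul n (a - b)"] by (auto simp: u_def)
    then have "u \<noteq> t" "u + (a - b) \<noteq> t" "u + a \<noteq> s"
      using terminal_offset multiples_diff[of "u - t + (a - b)" "a - b" "a - b"]
      by (auto simp: algebra_simps)
    then have "step (u + (a - b)) = step u" using step_diagonal by simp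
    then show ?case using Suc by (simp add: u_def algebra_simps)
  qed simp
  then show ?thesis using assms(2) by (auto simp: multiples_def)
qed

end

text \<open>As \<open>b\<close> is congruent to \<open>a\<close> modulo \<open>multiples (a - b)\<close>, the quotient by this subgroup is
  cyclic, generated by \<open>a\<close>, of order \<open>period\<close>; \<open>level v\<close> is the index of the coset of \<open>v\<close>,
  counted from that of \<open>t\<close>.\<close>
locale coset_levels =
  fixes a b t :: "'g::{ab_group_add,finite}"
  assumes generates: "generates {a, b}"
begin

definition period :: nat where
  "period = (LEAST k. 0 < k \<and> nsmul k a \<in> multiples (a - b))"

definition level :: "'g \<Rightarrow> nat" where
  "level v = (LEAST i. v - t - nsmul i a \<in> multiples (a - b))"

lemma period_pos: "0 < period" and nsmul_period: "nsmul period a \<in> multiples (a - b)"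
proof -
  have "0 < CARD('g) \<and> nsmul CARD('g) a \<in> multiples (a - b)"
    by (simp add: finite_UNIV_card_ge_0 nsmul_card_UNIV)
  then have "0 < period \<and> nsmul period a \<in> multiples (a - b)"
    unfolding period_def by (rule LeastI)
  then show "0 < period" "nsmul period a \<in> multiples (a - b)" by simp_all
qed

lemma nsmul_mod_period: "nsmul i a - nsmul (i mod period) a \<in> multiples (a - b)"
proof -
  have "nsmul i a - nsmul (i mod period) a = nsmul (i div period) (nsmul period a)"
    by (metis add_diff_cancel_right' div_mult_mod_eq nsmul_add nsmul_mult mult.commute)
  then show ?thesis using nsmul_period by auto
qed

lemma level_rep: "v - t - nsmul (level v) a \<in> multiples (a - b)"
  unfolding level_def using generates_ex_nsmul_coset[OF generates] by (rule LeastI_ex)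

lemma level_eqI:
  assumes "v - t - nsmul i a \<in> multiples (a - b)"
  shows "level v = i mod period"
proof -
  define j where "j = i mod period"
  have "(v - t - nsmul i a) + (nsmul i a - nsmul j a) \<in> multiples (a - b)"
    using assms nsmul_mod_period unfolding j_def by blast
  then have j: "v - t - nsmul j a \<in> multiples (a - b)" by simp
  then have "level v \<le> j" unfolding level_def by (rule Least_le)
  moreover have "j < period" using period_pos by (simp add: j_def)
  moreover have "nsmul (j - level v) a \<in> multiples (a - b)" if "level v < j"
  proof -
    have "(v - t - nsmul (level v) a) - (v - t - nsmul j a) = nsmul (j - level v) a"
      using that nsmul_add[of "j - level v" "level v" a] by simp
    then show ?thesis using level_rep j by (metis multiples_diff)
  qed
  ultimately show ?thesis
    using not_less_Least[of "j - level v" "\<lambda>k. 0 < k \<and> nsmul k a \<in> multiples (a - b)"]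
    unfolding j_def[symmetric] period_def[symmetric] by fastforce
qed

lemma level_lt: "level v < period"
  using level_eqI[OF level_rep] period_pos by (metis mod_less_divisor)

lemma level_0_iff: "level v = 0 \<longleftrightarrow> v - t \<in> multiples (a - b)"
  using level_rep[of v] level_eqI[of v 0] by auto

lemma level_terminal [simp]: "level t = 0"
  by (simp add: level_0_iff)

lemma level_same: "v - w \<in> multiples (a - b) \<Longrightarrow> level v = level w"
proof -
  assume "v - w \<in> multiples (a - b)"
  then have "(v - w) + (w - t - nsmul (level w) a) \<in> multiples (a - b)"
    using level_rep by blast
  then have "level v = level w mod period" by (intro level_eqI) (simp add: algebra_simps)
  then show ?thesis using level_lt by simp
qed

lemma level_succ: "y - (v + a) \<in> multiples (a - b) \<Longrightarrow> level y = Suc (level v) mod period"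
proof -
  assume "y - (v + a) \<in> multiples (a - b)"
  then have "(y - (v + a)) + (v - t - nsmul (level v) a) \<in> multiples (a - b)"
    using level_rep by blast
  then show ?thesis by (intro level_eqI) (simp add: algebra_simps)
qed

lemma level_nsmul: "i < period \<Longrightarrow> level (t + nsmul i a) = i"
  using level_eqI[of "t + nsmul i a" i] by simp

lemma nsmul_neq_0_below_period: "0 < i \<Longrightarrow> i < period \<Longrightarrow> nsmul i a \<noteq> 0"
  using level_nsmul[of i] by auto

lemma card_level: "i < period \<Longrightarrow> card {v. level v = i} = card {v. level v = 0}"
proof -
  assume i: "i < period"
  have image: "(\<lambda>v. v + nsmul i a) ` {v. level v = 0} = {v. level v = i}"
  proof (intro set_eqI iffI)
    fix w assume "w \<in> {v. level v = i}"
    then have "level (w - nsmul i a) = 0"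
      using level_rep[of w] level_0_iff by (simp add: algebra_simps)
    then show "w \<in> (\<lambda>v. v + nsmul i a) ` {v. level v = 0}"
      by (intro image_eqI[of _ _ "w - nsmul i a"]) simp_all
  next
    fix w assume "w \<in> (\<lambda>v. v + nsmul i a) ` {v. level v = 0}"
    then obtain v where v: "w = v + nsmul i a" "v - t \<in> multiples (a - b)"
      using level_0_iff by auto
    have "w - t - nsmul i a = v - t" unfolding v(1) by (simp add: algebra_simps)
    then have "w - t - nsmul i a \<in> multiples (a - b)" using v(2) by (simp only:)
    then show "w \<in> {v. level v = i}" using level_eqI i by simp
  qed
  have "inj_on (\<lambda>v. v + nsmul i a) {v. level v = 0}" by (simp add: inj_on_def)
  then show ?thesis using card_image image by metis
qed

lemma card_by_level:
  assumes "\<And>v. 0 < level v \<Longrightarrow> Q v = Q (t + nsmul (level v) a)"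
  shows "card {v. Q v} = card {v. Q v \<and> level v = 0}
    + card {v. level v = 0} * card {i \<in> {1..<period}. Q (t + nsmul i a)}"
proof -
  have level_part: "card {v. Q v \<and> level v = i} =
      (if Q (t + nsmul i a) then card {v. level v = 0} else 0)" if "i \<in> {1..<period}" for i
  proof -
    have "Q v \<longleftrightarrow> Q (t + nsmul i a)" if "level v = i" for v
      using assms[of v] that \<open>i \<in> {1..<period}\<close> by simp
    then have "{v. Q v \<and> level v = i} = (if Q (t + nsmul i a) then {v. level v = i} else {})"
      by auto
    then show ?thesis using card_level[of i] that by simp
  qed
  have "card {v. Q v} = (\<Sum>i<period. card {v. Q v \<and> level v = i})"
    using sum.group[of "{v. Q v}" "{..<period}" level "\<lambda>_. 1::nat"] level_lt
    by (simp add: image_subset_iff conj_commute)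
  also have "\<dots> = card {v. Q v \<and> level v = 0} + (\<Sum>i\<in>{1..<period}. card {v. Q v \<and> level v = i})"
    using period_pos by (simp add: lessThan_atLeast0 sum.atLeast_Suc_lessThan)
  also have "(\<Sum>i\<in>{1..<period}. card {v. Q v \<and> level v = i})
      = card {v. level v = 0} * card {i \<in> {1..<period}. Q (t + nsmul i a)}"
    by (simp add: level_part flip: sum.inter_filter)
  finally show ?thesis .
qed

end

locale quasi_path_pair =
  P1: quasi_path_map a b t s f + P2: quasi_path_map a b t' s' f' + coset_levels a b t
  for a b :: "'g::{ab_group_add,finite}" and t s f t' s' f' +
  assumes card_b_arcs_eq: "card P1.b_arcs = card P2.b_arcs"
begin

definition shift :: 'g where
  "shift = t' - t"

lemma add_shift_eq_terminal_iff [simp]: "v + shift = t' \<longleftrightarrow> v = t"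
  by (auto simp: shift_def algebra_simps)

lemma terminal_add_shift [simp]: "t + shift = t'"
  by (simp add: shift_def)

lemma start_shift: "s' = s + shift"
  using P1.terminal_offset P2.terminal_offset card_b_arcs_eq
  by (simp add: shift_def algebra_simps)

lemma step_terminal_eq: "P2.step t' = P1.step t"
  unfolding P1.step_terminal P2.step_terminal start_shift by (simp add: shift_def)

lemma step_terminal_coset:
  assumes "h \<in> multiples (a - b)"
  shows "P1.step (t + h) = P2.step (t' + h)"
proof -
  have "P1.step (t + nsmul n (a - b)) = P2.step (t + nsmul n (a - b) + shift)" for n
  proof (induction n)
    case 0
    show ?case using step_terminal_eq by simp
  next
    case (Suc n)
    define u where "u = t + nsmul n (a - b)"
    have next1: "t + nsmul (Suc n) (a - b) = u + (a - b)" by (simp add: u_def algebra_simps)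
    have next2: "u + (a - b) + shift = u + shift + (a - b)" by (simp add: algebra_simps)
    have IH: "P1.step u = P2.step (u + shift)" using Suc by (simp add: u_def)
    show ?case
    proof (cases "u + (a - b) = t")
      case True
      then have "u + shift + (a - b) = t'" by (metis add_shift_eq_terminal_iff next2)
      then show ?thesis unfolding next1 next2 using True step_terminal_eq by simp
    next
      case False
      then have "u + shift + (a - b) \<noteq> t'" by (metis add_shift_eq_terminal_iff next2)
      moreover have "u + shift + a = s' \<longleftrightarrow> u + a = s"
        by (simp add: start_shift add.assoc add.left_commute)
      ultimately show ?thesis
        unfolding next1 next2 using P1.step_diagonal[OF False] P2.step_diagonal IH by simp
    qed
  qed
  then show ?thesis using assms by (auto simp: multiples_def shift_def algebra_simps)
qed

lemma steps_at_level_rep: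
  assumes "0 < level v"
  shows "P1.step v = P1.step (t + nsmul (level v) a)"
    and "P2.step (v + shift) = P2.step (t + nsmul (level v) a + shift)"
proof -
  define r where "r = t + nsmul (level v) a"
  have h: "v - r \<in> multiples (a - b)" using level_rep[of v] by (simp add: r_def algebra_simps)
  have "level r \<noteq> 0" using assms level_nsmul[OF level_lt] by (simp add: r_def)
  then have r: "r - t \<notin> multiples (a - b)" by (simp add: level_0_iff)
  have "P1.step (r + (v - r)) = P1.step r" using P1.step_coset_const[OF r h] .
  then show "P1.step v = P1.step r" by simp
  have "r + shift - t' = r - t" by (simp add: shift_def)
  with r have "r + shift - t' \<notin> multiples (a - b)" by metis
  then have "P2.step (r + shift + (v - r)) = P2.step (r + shift)"
    using P2.step_coset_const h by blast
  moreover have "r + shift + (v - r) = v + shift" by (simp add: algebra_simps)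
  ultimately show "P2.step (v + shift) = P2.step (r + shift)" by simp
qed

definition defect :: "'g \<Rightarrow> 'g" where
  "defect v = P2.step (v + shift) - P1.step v"

lemma defect_in_multiples: "defect v \<in> multiples (a - b)"
proof (cases "v = t")
  case True
  then show ?thesis using step_terminal_eq by (simp add: defect_def)
next
  case False
  then have "P2.step (v + shift) = a \<or> P2.step (v + shift) = b" "P1.step v = a \<or> P1.step v = b"
    using P1.step_a_or_b P2.step_a_or_b by simp_all
  moreover have "b - a \<in> multiples (a - b)"
    using multiples_uminus[OF self_in_multiples[of "a - b"]] by simp
  ultimately show ?thesis by (auto simp: defect_def)
qed

lemma defect_level_0: "level v = 0 \<Longrightarrow> defect v = 0"
  using step_terminal_coset[of "v - t"] by (simp add: level_0_iff defect_def shift_def algebra_simps)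

lemma defect_level_rep: "defect v = defect (t + nsmul (level v) a)"
proof (cases "level v = 0")
  case True
  then show ?thesis using defect_level_0[of v] defect_level_0[of t] by simp
next
  case False
  then show ?thesis using steps_at_level_rep[of v] by (simp add: defect_def)
qed

lemma card_b_arcs_shift: "card P2.b_arcs = card {v. v \<noteq> t \<and> P2.step (v + shift) = b}"
proof -
  have "P2.b_arcs = (\<lambda>v. v + shift) ` {v. v \<noteq> t \<and> P2.step (v + shift) = b}"
  proof (intro set_eqI iffI)
    fix w assume w: "w \<in> P2.b_arcs"
    then have "w - shift \<noteq> t" using add_shift_eq_terminal_iff[of "w - shift"]
      by (auto simp: P2.b_arcs_def)
    then have "w - shift \<in> {v. v \<noteq> t \<and> P2.step (v + shift) = b}"
      using w by (simp add: P2.b_arcs_def)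
    then show "w \<in> (\<lambda>v. v + shift) ` {v. v \<noteq> t \<and> P2.step (v + shift) = b}"
      by (rule rev_image_eqI) simp
  qed (auto simp: P2.b_arcs_def)
  then show ?thesis by (simp add: card_image inj_on_def)
qed

text \<open>Each nonzero level contributes all or none of its vertices to the \<open>b\<close>-arcs, and level 0
  contributes the same vertices to both quasi-paths.\<close>
lemma card_b_steps_positive_levels_eq:
  "card {i \<in> {1..<period}. P1.step (t + nsmul i a) = b}
    = card {i \<in> {1..<period}. P2.step (t + nsmul i a + shift) = b}"
proof -
  define Q1 where "Q1 v \<longleftrightarrow> v \<noteq> t \<and> P1.step v = b" for v
  define Q2 where "Q2 v \<longleftrightarrow> v \<noteq> t \<and> P2.step (v + shift) = b" for v
  have not_terminal: "v \<noteq> t" "nsmul (level v) a \<noteq> 0" if "0 < level v" for v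
    using that nsmul_neq_0_below_period level_lt by auto
  have split1: "card {v. Q1 v} = card {v. Q1 v \<and> level v = 0}
      + card {v. level v = 0} * card {i \<in> {1..<period}. Q1 (t + nsmul i a)}"
    by (rule card_by_level) (simp add: Q1_def not_terminal steps_at_level_rep)
  have split2: "card {v. Q2 v} = card {v. Q2 v \<and> level v = 0}
      + card {v. level v = 0} * card {i \<in> {1..<period}. Q2 (t + nsmul i a)}"
    by (rule card_by_level) (simp add: Q2_def not_terminal steps_at_level_rep)
  have level_0_eq: "{v. Q1 v \<and> level v = 0} = {v. Q2 v \<and> level v = 0}"
  proof (rule Collect_cong)
    fix v
    show "Q1 v \<and> level v = 0 \<longleftrightarrow> Q2 v \<and> level v = 0"
    proof (cases "level v = 0")
      case True
      then have "P2.step (v + shift) = P1.step v" using defect_level_0[of v] by (simp add: defect_def)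
      then show ?thesis by (simp add: Q1_def Q2_def)
    qed simp
  qed
  have card_eq: "card {v. Q1 v} = card {v. Q2 v}"
    using card_b_arcs_eq card_b_arcs_shift by (simp add: P1.b_arcs_def Q1_def Q2_def)
  have "card {v. level v = 0} * card {i \<in> {1..<period}. Q1 (t + nsmul i a)}
      = card {v. level v = 0} * card {i \<in> {1..<period}. Q2 (t + nsmul i a)}"
    using split1 split2 card_eq unfolding level_0_eq by linarith
  moreover have "0 < card {v. level v = 0}"
    using level_terminal by (auto simp: card_gt_0_iff intro: exI[of _ t])
  ultimately have "card {i \<in> {1..<period}. Q1 (t + nsmul i a)} = card {i \<in> {1..<period}. Q2 (t + nsmul i a)}"
    using nat_mult_eq_cancel1 by blast
  moreover have "{i \<in> {1..<period}. Q1 (t + nsmul i a)} = {i \<in> {1..<period}. P1.step (t + nsmul i a) = b}"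
    "{i \<in> {1..<period}. Q2 (t + nsmul i a)} = {i \<in> {1..<period}. P2.step (t + nsmul i a + shift) = b}"
    using nsmul_neq_0_below_period by (auto simp: Q1_def Q2_def)
  ultimately show ?thesis by simp
qed

lemma sum_level_defects: "(\<Sum>i<period. defect (t + nsmul i a)) = 0"
proof -
  define I where "I = {1..<period}"
  have not_terminal: "t + nsmul i a \<noteq> t" "t + nsmul i a + shift \<noteq> t'" if "i \<in> I" for i
    using that nsmul_neq_0_below_period[of i] by (simp_all add: I_def)
  have "(\<Sum>i\<in>I. P1.step (t + nsmul i a))
      = nsmul (card I) a - nsmul (card {i \<in> I. P1.step (t + nsmul i a) = b}) (a - b)"
    using P1.step_a_or_b not_terminal(1) by (intro sum_two_valued) (simp_all add: I_def)
  moreover have "(\<Sum>i\<in>I. P2.step (t + nsmul i a + shift))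
      = nsmul (card I) a - nsmul (card {i \<in> I. P2.step (t + nsmul i a + shift) = b}) (a - b)"
    using P2.step_a_or_b not_terminal(2) by (intro sum_two_valued) (simp_all add: I_def)
  ultimately have "(\<Sum>i\<in>I. defect (t + nsmul i a)) = 0"
    using card_b_steps_positive_levels_eq by (simp add: defect_def sum_subtractf I_def)
  moreover have "{..<period} = insert 0 I" using period_pos by (auto simp: I_def)
  ultimately show ?thesis using defect_level_0[of t] by (simp add: I_def)
qed

text \<open>Because \<open>f\<close> raises the level by one modulo \<open>period\<close>, the potential satisfies
  \<open>potential (f v) = potential v + defect v\<close>; across the wrap-around to level 0 this is
  exactly \<open>sum_level_defects\<close>.\<close>
definition potential :: "'g \<Rightarrow> 'g" where
  "potential v = (\<Sum>i<level v. defect (t + nsmul i a))"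

lemma potential_in_multiples: "potential v \<in> multiples (a - b)"
  unfolding potential_def by (rule multiples_sum) (rule defect_in_multiples)

lemma potential_succ: "potential (f v) = potential v + defect v"
proof -
  have level_f: "level (f v) = Suc (level v) mod period"
    using level_succ[OF P1.succ_in_coset_of_add_a] .
  have sum_Suc: "potential v + defect v = (\<Sum>i<Suc (level v). defect (t + nsmul i a))"
    by (simp add: potential_def defect_level_rep[of v])
  show ?thesis
  proof (cases "Suc (level v) < period")
    case True
    then show ?thesis using level_f sum_Suc by (simp add: potential_def)
  next
    case False
    then have "Suc (level v) = period" using level_lt[of v] by linarith
    then show ?thesis using level_f sum_Suc sum_level_defects by (simp add: potential_def)
  qed
qed

definition conjugator :: "'g \<Rightarrow> 'g" where
  "conjugator v = v + shift + potential v"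

lemma step_conjugator: "P2.step (conjugator v) = P2.step (v + shift)"
proof (cases "level v = 0")
  case True
  then show ?thesis by (simp add: conjugator_def potential_def)
next
  case False
  then have "v - t \<notin> multiples (a - b)" by (simp add: level_0_iff)
  moreover have "v + shift - t' = v - t" by (simp add: shift_def)
  ultimately have "v + shift - t' \<notin> multiples (a - b)" by metis
  then show ?thesis
    unfolding conjugator_def using P2.step_coset_const potential_in_multiples by blast
qed

lemma conjugator_commute: "f' (conjugator v) = conjugator (f v)"
proof -
  have "f' (conjugator v) = conjugator v + P2.step (v + shift)"
    by (simp add: P2.f_eq_step step_conjugator)
  also have "\<dots> = v + P1.step v + shift + (potential v + defect v)"
    by (simp add: conjugator_def defect_def algebra_simps)
  also have "\<dots> = conjugator (f v)"
    unfolding conjugator_def potential_succ by (simp add: P1.f_eq_step)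
  finally show ?thesis .
qed

lemma inj_conjugator: "inj conjugator"
proof (rule injI)
  fix v w assume "conjugator v = conjugator w"
  then have vw: "v - w = potential w - potential v" by (simp add: conjugator_def algebra_simps)
  then have "v - w \<in> multiples (a - b)"
    using multiples_diff[OF potential_in_multiples potential_in_multiples] by simp
  then have "level v = level w" by (rule level_same)
  then have "potential v = potential w" by (simp add: potential_def)
  then show "v = w" using vw by simp
qed

end

lemma conjugate_if_card_b_arcs_eq:
  assumes "generates {a, b}"
    and "quasi_path_map a b t s f" and "quasi_path_map a b t' s' f'"
    and "card (quasi_path_map.b_arcs b t f) = card (quasi_path_map.b_arcs b t' f')"
  obtains \<phi> where "bij \<phi>" and "\<And>v. f' (\<phi> v) = \<phi> (f v)"
proof -
  interpret quasi_path_pair a b t s f t' s' f'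
    using assms by (simp add: quasi_path_pair_def quasi_path_pair_axioms_def coset_levels_def)
  have "bij conjugator"
    using inj_conjugator finite_UNIV_inj_surj[OF finite_class.finite_UNIV] by (simp add: bij_def)
  then show ?thesis using that conjugator_commute by blast
qed

lemma single_orbit_conj:
  assumes "surj \<phi>" and "\<And>v. g (\<phi> v) = \<phi> (f v)" and "\<forall>v. \<exists>n. (f ^^ n) x = v"
  shows "\<forall>w. \<exists>n. (g ^^ n) (\<phi> x) = w"
proof
  fix w
  obtain v where "w = \<phi> v" using assms(1) by blast
  moreover obtain n where "(f ^^ n) x = v" using assms(3) by blast
  moreover have "(g ^^ n) (\<phi> x) = \<phi> ((f ^^ n) x)"
    by (induction n) (simp_all add: assms(2))
  ultimately show "\<exists>n. (g ^^ n) (\<phi> x) = w" by blast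
qed

theorem mainTheorem18:
  fixes a b :: "'g::{ab_group_add, finite}"
    and P P' :: "('g \<times> 'g) set"
  assumes "a \<noteq> b"
    and "generates {a, b}"
    and "spanning_quasi_path a b P"
    and "spanning_quasi_path a b P'"
    and "delta_b b P = delta_b b P'"
    and "hamiltonian_path a b P"
  shows "hamiltonian_path a b P'"
proof -
  \<comment> \<open>The hypothesis that \<open>P\<close> is a spanning quasi-path is implied by the last one and unused.\<close>
  obtain t s f where f: "quasi_path_map a b t s f" "P = succ_arcs f t"
    and orbit: "\<forall>v. \<exists>n. (f ^^ n) s = v"
    using hamiltonian_path_succ_map[OF assms(1,6)] .
  obtain t' s' f' where f': "quasi_path_map a b t' s' f'" "P' = succ_arcs f' t'"
    and hamiltonian: "\<exists>x. \<forall>v. \<exists>n. (f' ^^ n) x = v \<Longrightarrow> hamiltonian_path a b P'"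
    using spanning_quasi_path_succ_map[OF assms(1,4)] by metis
  have "card (quasi_path_map.b_arcs b t f) = card (quasi_path_map.b_arcs b t' f')"
    using assms(5) f f' by (simp add: quasi_path_map.delta_b_succ_arcs)
  then obtain \<phi> where "bij \<phi>" "\<And>v. f' (\<phi> v) = \<phi> (f v)"
    using conjugate_if_card_b_arcs_eq[OF assms(2) f(1) f'(1)] by blast
  then show ?thesis
    using hamiltonian single_orbit_conj[OF bij_is_surj _ orbit] by blast
qed

end
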